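(* There exists a $BH(19,6)$ matrix, i.e. a $19\times 19$ complex matrix $H$ all of whose entries are sixth roots of unity and which satisfies $HH^\ast=19I_{19}$.
   Context: $H^\ast$ denotes the conjugate transpose and $I_{19}$ the identity matrix of order $19$. *)

theory Defs
  imports "HOL-Analysis.Analysis"
begin

definition conj_transpose :: "complex ^'n ^'m \<Rightarrow> complex ^'m ^'n" where
  "conj_transpose A = (\<chi> i j. cnj (A $ j $ i))"

end

theory Submission
  imports Defs
begin

(* A Butson-Hadamard matrix BH(19,6) is exhibited in the form H = (omega ^ E a k), where
   omega = exp(i pi/3) is a primitive sixth root of unity and the exponent table E is a
   bordered circulant: a circulant core of order 18 with first row r, surrounded by a
   row and a column of zeros.

   Since cnj omega = omega ^ 5, the entries of H H^* are sums of powers of omega, so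
   H H^* = 19 I amounts to an orthogonality condition on the table E.  For a bordered
   circulant, rotating the summation index reduces this condition to two properties of
   the single sequence r: the sum of the omega ^ r m is -1, and every off-peak periodic
   autocorrelation sum omega ^ (r (m + d) - r m) is -1 as well.  Finally each power
   omega ^ k equals u k + v k * omega with integer coordinates depending on k mod 6, so
   these finitely many sums are integer computations, checked by evaluation. *)

definition \<omega> :: complex where
  "\<omega> = Complex (1/2) (sqrt 3 / 2)"

lemma omega_sq: "\<omega>\<^sup>2 = \<omega> - 1"
  by (simp add: \<omega>_def power2_eq_square complex_eq_iff field_simps)

lemma omega_cube: "\<omega> ^ 3 = -1"
proof -
  have "\<omega> ^ 3 = \<omega> * \<omega>\<^sup>2" by (simp add: power_numeral_reduce)
  also have "\<dots> = \<omega> * \<omega> - \<omega>" by (simp add: omega_sq algebra_simps)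
  also have "\<dots> = -1" using omega_sq by (simp add: power2_eq_square)
  finally show ?thesis .
qed

lemma omega_pow_6: "\<omega> ^ 6 = 1"
  using omega_cube power_mult[of \<omega> 3 2] by simp

lemma omega_pow_6_mult: "\<omega> ^ (6 * k) = 1"
  by (simp add: power_mult omega_pow_6)

lemma omega_pow_mod: "\<omega> ^ k = \<omega> ^ (k mod 6)"
proof -
  have "\<omega> ^ k = \<omega> ^ (6 * (k div 6)) * \<omega> ^ (k mod 6)"
    by (simp flip: power_add)
  then show ?thesis by (simp add: omega_pow_6_mult)
qed

lemma cnj_omega: "cnj \<omega> = \<omega> ^ 5"
proof -
  have "\<omega> ^ 5 = \<omega>\<^sup>2 * \<omega> ^ 3" by (simp flip: power_add)
  also have "\<dots> = 1 - \<omega>" by (simp add: omega_sq omega_cube)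
  finally show ?thesis by (simp add: \<omega>_def complex_eq_iff)
qed

text \<open>Coordinates in the basis \<open>1, \<omega>\<close>: \<open>\<omega> ^ k = unit_coord k + omega_coord k * \<omega>\<close>.  They are
  executable, which turns statements about sums of powers of \<open>\<omega>\<close> into integer computations.\<close>
definition unit_coord :: "nat \<Rightarrow> int" where
  "unit_coord k = [1, 0, -1, -1, 0, 1] ! (k mod 6)"

definition omega_coord :: "nat \<Rightarrow> int" where
  "omega_coord k = [0, 1, 1, 0, -1, -1] ! (k mod 6)"

lemma omega_pow_coords: "\<omega> ^ k = of_int (unit_coord k) + of_int (omega_coord k) * \<omega>"
proof -
  have pow_plus_3: "\<omega> ^ (m + 3) = -(\<omega> ^ m)" for m
    by (simp add: power_add omega_cube)
  have "k mod 6 \<in> {0, 1, 2, 3, 4, 5}" by auto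
  then show ?thesis
    using pow_plus_3[of 1] pow_plus_3[of 2]
    by (subst omega_pow_mod) (auto simp: unit_coord_def omega_coord_def omega_sq omega_cube)
qed

definition omega_sum_equals :: "nat list \<Rightarrow> int \<Rightarrow> bool" where
  "omega_sum_equals ks z \<longleftrightarrow>
     sum_list (map unit_coord ks) = z \<and> sum_list (map omega_coord ks) = 0"

lemma omega_sum_equalsD:
  assumes "omega_sum_equals (map f [0..<n]) z"
  shows "(\<Sum>m<n. \<omega> ^ f m) = of_int z"
proof -
  have "(\<Sum>m<n. \<omega> ^ f m) =
          of_int (\<Sum>m<n. unit_coord (f m)) + of_int (\<Sum>m<n. omega_coord (f m)) * \<omega>"
    by (simp add: omega_pow_coords sum.distrib sum_distrib_right)
  then show ?thesis
    using assms
    by (simp add: omega_sum_equals_def sum_list_sum_nth atLeast0LessThan flip: of_int_sum)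
qed

definition butson_hadamard :: "nat \<Rightarrow> complex ^'n ^'n \<Rightarrow> bool" where
  "butson_hadamard q H \<longleftrightarrow>
     (\<forall>i j. (H $ i $ j) ^ q = 1) \<and> H ** conj_transpose H = real CARD('n) *\<^sub>R mat 1"

definition omega_matrix :: "('n \<Rightarrow> 'm \<Rightarrow> nat) \<Rightarrow> complex ^'m ^'n" where
  "omega_matrix e = (\<chi> i j. \<omega> ^ e i j)"

lemma omega_matrix_sixth_roots: "(omega_matrix e $ i $ j) ^ 6 = 1"
  by (simp add: omega_matrix_def mult.commute[of _ 6] omega_pow_6_mult flip: power_mult)

lemma omega_matrix_gram:
  "(omega_matrix e ** conj_transpose (omega_matrix e)) $ a $ b =
     (\<Sum>k\<in>UNIV. \<omega> ^ (e a k + 5 * e b k))"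
  by (simp add: omega_matrix_def matrix_matrix_mult_def conj_transpose_def
                cnj_omega power_add power_mult)

definition orthogonal_table :: "nat \<Rightarrow> (nat \<Rightarrow> nat \<Rightarrow> nat) \<Rightarrow> bool" where
  "orthogonal_table N E \<longleftrightarrow>
     (\<forall>a<N. \<forall>b<N. (\<Sum>k<N. \<omega> ^ (E a k + 5 * E b k)) = (if a = b then of_nat N else 0))"

lemma butson_hadamard_from_table:
  assumes "orthogonal_table CARD('n::finite) E"
  shows "\<exists>H :: complex ^'n ^'n. butson_hadamard 6 H"
proof -
  obtain idx :: "'n \<Rightarrow> nat" where idx: "bij_betw idx UNIV {..<CARD('n)}"
    using ex_bij_betw_finite_nat[of "UNIV :: 'n set"] by (auto simp: atLeast0LessThan)
  have idx_lt: "idx i < CARD('n)" for i using idx by (auto simp: bij_betw_def)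
  define H :: "complex ^'n ^'n" where "H = omega_matrix (\<lambda>i j. E (idx i) (idx j))"
  have "(H ** conj_transpose H) $ a $ b = (real CARD('n) *\<^sub>R mat 1 :: complex ^'n ^'n) $ a $ b"
    for a b
  proof -
    have "(H ** conj_transpose H) $ a $ b =
            (\<Sum>k\<in>UNIV. \<omega> ^ (E (idx a) (idx k) + 5 * E (idx b) (idx k)))"
      by (simp add: H_def omega_matrix_gram)
    also have "\<dots> = (\<Sum>k<CARD('n). \<omega> ^ (E (idx a) k + 5 * E (idx b) k))"
      by (rule sum.reindex_bij_betw[OF idx])
    also have "\<dots> = (if a = b then of_nat CARD('n) else 0)"
      using assms idx_lt idx by (simp add: orthogonal_table_def bij_betw_def inj_eq)
    finally show ?thesis by (simp add: mat_def flip: of_real_def)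
  qed
  then have "H ** conj_transpose H = real CARD('n) *\<^sub>R mat 1"
    by (simp add: vec_eq_iff)
  then show ?thesis
    unfolding butson_hadamard_def H_def using omega_matrix_sixth_roots by blast
qed

lemma sum_rotate_one: "(\<Sum>m<(n::nat). f ((m + 1) mod n)) = (\<Sum>m<n. f m)"
proof (cases n)
  case (Suc k)
  have "(\<Sum>m<Suc k. f ((m + 1) mod Suc k)) = (\<Sum>m<k. f (Suc m)) + f 0"
    by (auto simp: sum.lessThan_Suc intro!: sum.cong)
  also have "\<dots> = (\<Sum>m<Suc k. f m)"
    by (subst sum.lessThan_Suc_shift) (simp add: add.commute)
  finally show ?thesis using Suc by simp
qed simp

lemma sum_rotate: "(\<Sum>m<(n::nat). f ((m + c) mod n)) = (\<Sum>m<n. f m)"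
proof (induction c arbitrary: f)
  case 0
  then show ?case by simp
next
  case (Suc c)
  have "(\<Sum>m<n. f ((m + Suc c) mod n)) = (\<Sum>m<n. (\<lambda>x. f ((x + 1) mod n)) ((m + c) mod n))"
    by (simp add: mod_Suc_eq)
  also have "\<dots> = (\<Sum>m<n. f m)"
    using Suc.IH[of "\<lambda>x. f ((x + 1) mod n)"] sum_rotate_one by simp
  finally show ?case .
qed

definition bordered_circulant :: "nat \<Rightarrow> (nat \<Rightarrow> nat) \<Rightarrow> nat \<Rightarrow> nat \<Rightarrow> nat" where
  "bordered_circulant n r a k = (if a = 0 \<or> k = 0 then 0 else r ((k + n - a) mod n))"

definition perfect_sequence :: "nat \<Rightarrow> (nat \<Rightarrow> nat) \<Rightarrow> bool" where
  "perfect_sequence n r \<longleftrightarrow>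
     (\<Sum>m<n. \<omega> ^ r m) = -1 \<and>
     (\<forall>d. 0 < d \<longrightarrow> d < n \<longrightarrow> (\<Sum>m<n. \<omega> ^ (r ((m + d) mod n) + 5 * r m)) = -1)"

lemma circulant_rows_rotate:
  assumes "1 \<le> a" "a \<le> n" "1 \<le> b" "b \<le> (n::nat)"
  shows "(\<Sum>m<n. F ((Suc m + n - a) mod n) ((Suc m + n - b) mod n)) =
         (\<Sum>m<n. F ((m + (b + n - a) mod n) mod n) m)"
proof -
  have shift: "((Suc m + n - b) mod n + (b + n - a) mod n) mod n = (Suc m + n - a) mod n" for m
  proof -
    have "Suc m + n - b + (b + n - a) = (Suc m + n - a) + n" using assms by linarith
    then show ?thesis by (metis mod_add_eq mod_add_self2)
  qed
  then have "(\<Sum>m<n. F ((Suc m + n - a) mod n) ((Suc m + n - b) mod n)) =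
             (\<Sum>m<n. (\<lambda>x. F ((x + (b + n - a) mod n) mod n) x) ((m + (1 + n - b)) mod n))"
    using assms shift by (simp add: Suc_diff_le)
  also have "\<dots> = (\<Sum>m<n. F ((m + (b + n - a) mod n) mod n) m)"
    by (rule sum_rotate)
  finally show ?thesis .
qed

lemma perfect_sequence_rotated_sums:
  assumes "perfect_sequence n r" "1 \<le> b" "b \<le> n"
  shows "(\<Sum>m<n. \<omega> ^ r ((Suc m + n - b) mod n)) = -1"
    and "(\<Sum>m<n. \<omega> ^ (5 * r ((Suc m + n - b) mod n))) = -1"
proof -
  have rotate: "(\<Sum>m<n. f ((Suc m + n - b) mod n)) = (\<Sum>m<n. f m)" for f :: "nat \<Rightarrow> complex"
    using circulant_rows_rotate[OF assms(2,3,2,3), of "\<lambda>x y. f y"] by simp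
  have row_sum: "(\<Sum>m<n. \<omega> ^ r m) = -1"
    using assms(1) by (simp add: perfect_sequence_def)
  then have "(\<Sum>m<n. \<omega> ^ (5 * r m)) = -1"
    using cnj_sum[of "\<lambda>m. \<omega> ^ r m" "{..<n}"] by (simp add: cnj_omega power_mult)
  with row_sum show "(\<Sum>m<n. \<omega> ^ r ((Suc m + n - b) mod n)) = -1"
    and "(\<Sum>m<n. \<omega> ^ (5 * r ((Suc m + n - b) mod n))) = -1"
    using rotate[of "\<lambda>x. \<omega> ^ r x"] rotate[of "\<lambda>x. \<omega> ^ (5 * r x)"] by simp_all
qed

lemma perfect_sequence_core_rows:
  assumes "perfect_sequence n r" "1 \<le> a" "a \<le> n" "1 \<le> b" "b \<le> n"
  shows "(\<Sum>m<n. \<omega> ^ (r ((Suc m + n - a) mod n) + 5 * r ((Suc m + n - b) mod n))) =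
           (if a = b then of_nat n else -1)"
proof -
  define d where "d = (b + n - a) mod n"
  have "(\<Sum>m<n. \<omega> ^ (r ((Suc m + n - a) mod n) + 5 * r ((Suc m + n - b) mod n))) =
          (\<Sum>m<n. \<omega> ^ (r ((m + d) mod n) + 5 * r m))"
    unfolding d_def by (rule circulant_rows_rotate[OF assms(2-5)])
  also have "\<dots> = (if a = b then of_nat n else -1)"
  proof (cases "a = b")
    case True
    then have "d = 0" by (simp add: d_def)
    then show ?thesis
      using True by (simp add: omega_pow_6_mult)
  next
    case False
    then have "0 < d" "d < n"
      using assms by (auto simp: d_def mod_if)
    then show ?thesis
      using False assms(1) by (simp add: perfect_sequence_def)
  qed
  finally show ?thesis .
qed

lemma bordered_circulant_orthogonal:
  assumes "perfect_sequence n r"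
  shows "orthogonal_table (Suc n) (bordered_circulant n r)"
  unfolding orthogonal_table_def
proof (intro allI impI)
  fix a b assume ab: "a < Suc n" "b < Suc n"
  let ?E = "bordered_circulant n r"
  have "(\<Sum>k<Suc n. \<omega> ^ (?E a k + 5 * ?E b k)) =
          1 + (\<Sum>m<n. \<omega> ^ (?E a (Suc m) + 5 * ?E b (Suc m)))"
    by (simp only: sum.lessThan_Suc_shift) (simp add: bordered_circulant_def)
  also have "\<dots> = (if a = b then of_nat (Suc n) else 0)"
    using perfect_sequence_rotated_sums[OF assms] perfect_sequence_core_rows[OF assms] ab
    by (cases "a = 0"; cases "b = 0") (auto simp: bordered_circulant_def)
  finally show "(\<Sum>k<Suc n. \<omega> ^ (?E a k + 5 * ?E b k)) = (if a = b then of_nat (Suc n) else 0)" .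
qed

definition perfect_sequence_check :: "nat \<Rightarrow> (nat \<Rightarrow> nat) \<Rightarrow> bool" where
  "perfect_sequence_check n r \<longleftrightarrow>
     omega_sum_equals (map r [0..<n]) (-1) \<and>
     list_all (\<lambda>d. omega_sum_equals (map (\<lambda>m. r ((m + d) mod n) + 5 * r m) [0..<n]) (-1))
       [1..<n]"

lemma perfect_sequenceI:
  assumes "perfect_sequence_check n r"
  shows "perfect_sequence n r"
proof -
  have "(\<Sum>m<n. \<omega> ^ (r ((m + d) mod n) + 5 * r m)) = -1" if "0 < d" "d < n" for d
    using assms that omega_sum_equalsD[of "\<lambda>m. r ((m + d) mod n) + 5 * r m" n "-1"]
    by (simp add: perfect_sequence_check_def list_all_iff)
  moreover have "(\<Sum>m<n. \<omega> ^ r m) = -1"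
    using assms omega_sum_equalsD[of r n "-1"] by (simp add: perfect_sequence_check_def)
  ultimately show ?thesis
    by (simp add: perfect_sequence_def)
qed

definition core_sequence :: "nat \<Rightarrow> nat" where
  "core_sequence m = [5, 5, 3, 5, 3, 5, 5, 1, 3, 1, 1, 3, 4, 3, 1, 1, 3, 1] ! m"

lemma core_sequence_perfect: "perfect_sequence 18 core_sequence"
  by (rule perfect_sequenceI) code_simp

theorem theorem3:
  shows "\<exists>H :: complex ^19 ^19.
           (\<forall>i j. (H $ i $ j) ^ 6 = 1) \<and>
           H ** conj_transpose H = (19::real) *\<^sub>R mat 1"
proof -
  have "orthogonal_table CARD(19) (bordered_circulant 18 core_sequence)"
    using bordered_circulant_orthogonal[OF core_sequence_perfect] by simp
  then obtain H :: "complex ^19 ^19" where "butson_hadamard 6 H"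
    using butson_hadamard_from_table by blast
  then show ?thesis
    unfolding butson_hadamard_def by auto
qed

end
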